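(* There is an absolute constant $a>0$ such that the following holds. For any $c\ge 1$ and any $T$ with $8n<T\le \frac{n^2}{2048c^2}$, any (possibly randomized and adaptive) algorithm that, on every correlation clustering instance on $n$ vertices, outputs a clustering with expected cost at most $c\cdot\mathrm{OPT}+T$ must make at least $a\cdot\frac{n^3}{Tc^2}$ adaptive edge similarity queries, i.e. $\Omega\!\left(\frac{n^3}{Tc^2}\right)$ queries.
   Context: Correlation clustering: the input is $V=[n]$ and a complete graph on $V$ with edges labeled ``$+$'' or ``$-$''; $s(x,y)=1$ iff $\{x,y\}$ is a ``$+$'' edge. A clustering is a function $\ell:V\to\mathbb{N}$; its cost is $\sum_{\{x,y\}:\ell(x)=\ell(y)}(1-s(x,y))+\sum_{\{x,y\}:\ell(x)\neq\ell(y)}s(x,y)$, and $\mathrm{OPT}$ is the minimum cost over all clusterings of the instance. The algorithm has access to the instance only through edge similarity queries: querying a pair $(x,y)$ reveals $s(x,y)$; queries may be chosen adaptively based on previous answers. *)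

theory Defs
  imports "HOL-Probability.Probability"
begin

text \<open>Vertices are V = {0..<n} (standing for [n]). An instance is a symmetric
 similarity predicate s; s x y = True iff {x,y} is a "+" edge. Outside V it is False.\<close>

definition cc_instance :: "nat \<Rightarrow> (nat \<Rightarrow> nat \<Rightarrow> bool) \<Rightarrow> bool" where
  "cc_instance n s \<longleftrightarrow> (\<forall>x y. s x y = s y x) \<and> (\<forall>x y. s x y \<longrightarrow> x < n \<and> y < n)"

definition cc_cost :: "nat \<Rightarrow> (nat \<Rightarrow> nat \<Rightarrow> bool) \<Rightarrow> (nat \<Rightarrow> nat) \<Rightarrow> nat" where
  "cc_cost n s l =
     card {(x, y). x < y \<and> y < n \<and> l x = l y \<and> \<not> s x y}
   + card {(x, y). x < y \<and> y < n \<and> l x \<noteq> l y \<and> s x y}"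

definition cc_OPT :: "nat \<Rightarrow> (nat \<Rightarrow> nat \<Rightarrow> bool) \<Rightarrow> nat" where
  "cc_OPT n s = (LEAST k. \<exists>l. cc_cost n s l = k)"

text \<open>A deterministic adaptive query algorithm is a decision tree: an inner node
 queries the pair (x,y) and branches on the answer s x y; a leaf outputs a clustering.\<close>
datatype qtree = Leaf "nat \<Rightarrow> nat" | Query nat nat qtree qtree

fun qt_output :: "qtree \<Rightarrow> (nat \<Rightarrow> nat \<Rightarrow> bool) \<Rightarrow> (nat \<Rightarrow> nat)" where
  "qt_output (Leaf l) s = l"
| "qt_output (Query x y t f) s = (if s x y then qt_output t s else qt_output f s)"

fun qt_queries :: "qtree \<Rightarrow> (nat \<Rightarrow> nat \<Rightarrow> bool) \<Rightarrow> nat" where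
  "qt_queries (Leaf l) s = 0"
| "qt_queries (Query x y t f) s = Suc (if s x y then qt_queries t s else qt_queries f s)"

text \<open>A randomized adaptive algorithm is a probability distribution over decision trees.\<close>
definition expected_cost :: "nat \<Rightarrow> qtree pmf \<Rightarrow> (nat \<Rightarrow> nat \<Rightarrow> bool) \<Rightarrow> real" where
  "expected_cost n A s = measure_pmf.expectation A (\<lambda>t. real (cc_cost n s (qt_output t s)))"

end

theory Submission
  imports Defs
begin

text \<open>Yao's principle over a planted family. Split off m clusters of size k, with k of order
  T/n and m = n/(2k), and let every remaining vertex either join one of the m clusters or stay
  alone, uniformly among 2m choices. Every such instance has OPT = 0, so the algorithm pays at
  most T in expectation on each of them, whatever c is. Fix a decision tree and a vertex v. If
  the run on the instance where v stays alone makes r queries at v, the tree cannot tell this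
  instance apart from the at least m - r instances that put v in a cluster it never probed. One
  output can be cheap at v for at most one of these, so on average m * (cost at v) +
  k * (queries at v) is at least of order k m. Summing over the n/2 free vertices and taking
  expectations bounds n k m by a constant times m T + k Q, so Q is of order n m, i.e. n^2/k,
  i.e. n^3/T.\<close>

fun query_path :: "qtree \<Rightarrow> (nat \<Rightarrow> nat \<Rightarrow> bool) \<Rightarrow> (nat \<times> nat) list" where
  "query_path (Leaf l) s = []"
| "query_path (Query x y t f) s = (x, y) # (if s x y then query_path t s else query_path f s)"

lemma length_query_path: "length (query_path t s) = qt_queries t s"
  by (induction t) auto

lemma query_path_cong:
  assumes "\<forall>(x, y) \<in> set (query_path t s). s' x y = s x y"
  shows "query_path t s' = query_path t s \<and> qt_output t s' = qt_output t s"
  using assms by (induction t) auto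

definition incident_queries :: "(nat \<times> nat) list \<Rightarrow> nat \<Rightarrow> nat" where
  "incident_queries ps v = length (filter (\<lambda>(x, y). x = v \<or> y = v) ps)"

definition path_neighbours :: "(nat \<times> nat) list \<Rightarrow> nat \<Rightarrow> nat set" where
  "path_neighbours ps v = {u. (v, u) \<in> set ps \<or> (u, v) \<in> set ps}"

lemma sum_incident_queries_le:
  assumes "finite S"
  shows "(\<Sum>v\<in>S. incident_queries ps v) \<le> 2 * length ps"
proof (induction ps)
  case Nil
  then show ?case by (simp add: incident_queries_def)
next
  case (Cons p ps)
  obtain a b where p: "p = (a, b)" by fastforce
  have "(\<Sum>v\<in>S. if v = a \<or> v = b then 1 else 0 :: nat) = card (S \<inter> {a, b})"
    using assms by (simp add: sum.If_cases Int_def conj_commute)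
  also have "\<dots> \<le> card {a, b}"
    by (rule card_mono) auto
  also have "\<dots> \<le> 2"
    by (simp add: card_insert_le_m1)
  finally have "(\<Sum>v\<in>S. if v = a \<or> v = b then 1 else 0 :: nat) \<le> 2" .
  moreover have "incident_queries (p # ps) v = (if v = a \<or> v = b then 1 else 0) + incident_queries ps v"
    for v by (auto simp: incident_queries_def p)
  ultimately show ?case
    using Cons by (simp add: sum.distrib)
qed

lemma finite_path_neighbours: "finite (path_neighbours ps v)"
proof -
  have "path_neighbours ps v \<subseteq> fst ` set ps \<union> snd ` set ps"
    by (force simp: path_neighbours_def)
  then show ?thesis
    by (rule finite_subset) simp
qed

lemma card_path_neighbours_le: "card (path_neighbours ps v) \<le> incident_queries ps v"
proof (induction ps)
  case Nil
  then show ?case by (simp add: path_neighbours_def incident_queries_def)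
next
  case (Cons p ps)
  obtain a b where p: "p = (a, b)" by fastforce
  define N where "N = {u. (v, u) = (a, b) \<or> (u, v) = (a, b)}"
  have "card N \<le> (if a = v \<or> b = v then 1 else 0)"
  proof (cases "a = v \<or> b = v")
    case True
    then have "N \<subseteq> {if a = v then b else a}" by (auto simp: N_def)
    then have "card N \<le> card {if a = v then b else a}" by (intro card_mono) simp_all
    then show ?thesis using True by simp
  next
    case False
    then show ?thesis by (simp add: N_def)
  qed
  moreover have "path_neighbours (p # ps) v = N \<union> path_neighbours ps v"
    by (auto simp: path_neighbours_def N_def p)
  ultimately show ?case
    using Cons card_Un_le[of N "path_neighbours ps v"]
    by (cases "a = v \<or> b = v") (auto simp: incident_queries_def p)
qed

lemma card_Diff_image_path_neighbours:
  "m \<le> card ({..<m} - f ` path_neighbours ps v) + incident_queries ps v"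
proof -
  have "card (f ` path_neighbours ps v) \<le> incident_queries ps v"
    using card_image_le[OF finite_path_neighbours] card_path_neighbours_le le_trans by blast
  moreover have "m - card (f ` path_neighbours ps v) \<le> card ({..<m} - f ` path_neighbours ps v)"
    using diff_card_le_card_Diff[OF finite_imageI[OF finite_path_neighbours]] by (metis card_lessThan)
  ultimately show ?thesis
    by linarith
qed

definition cluster_instance :: "nat \<Rightarrow> (nat \<Rightarrow> nat) \<Rightarrow> nat \<Rightarrow> nat \<Rightarrow> bool" where
  "cluster_instance n l x y \<longleftrightarrow> x < n \<and> y < n \<and> x \<noteq> y \<and> l x = l y"

lemma cc_instance_cluster_instance: "cc_instance n (cluster_instance n l)"
  unfolding cc_instance_def cluster_instance_def by auto

lemma cc_OPT_cluster_instance: "cc_OPT n (cluster_instance n l) = 0"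
proof -
  have no_disagreement:
    "{(x, y). x < y \<and> y < n \<and> l x = l y \<and> \<not> cluster_instance n l x y} = {}"
    "{(x, y). x < y \<and> y < n \<and> l x \<noteq> l y \<and> cluster_instance n l x y} = {}"
    by (auto simp: cluster_instance_def)
  have "cc_cost n (cluster_instance n l) l = 0"
    unfolding cc_cost_def no_disagreement by simp
  then show ?thesis
    unfolding cc_OPT_def by (intro Least_eq_0) blast
qed

lemma cc_cost_le: "cc_cost n s l \<le> 2 * n * n"
proof -
  have "card {(x, y). x < y \<and> y < n \<and> P x y} \<le> card ({..<n} \<times> {..<n})" for P
    by (intro card_mono) auto
  from this[of "\<lambda>x y. l x = l y \<and> \<not> s x y"] this[of "\<lambda>x y. l x \<noteq> l y \<and> s x y"]
  show ?thesis
    unfolding cc_cost_def card_cartesian_product card_lessThan by simp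
qed

definition vertex_cost :: "nat \<Rightarrow> (nat \<Rightarrow> nat \<Rightarrow> bool) \<Rightarrow> (nat \<Rightarrow> nat) \<Rightarrow> nat \<Rightarrow> nat" where
  "vertex_cost n s l v = card {y. y < n \<and> y \<noteq> v \<and> (l y = l v) \<noteq> s v y}"

lemma sum_vertex_cost_le:
  assumes sym: "\<And>x y. s x y = s y x" and F: "F \<subseteq> {..<n}"
  shows "(\<Sum>v\<in>F. vertex_cost n s l v) \<le> 2 * cc_cost n s l"
proof -
  define E where "E = {(x, y). x < y \<and> y < n \<and> (l x = l y) \<noteq> s x y}"
  have finite_E: "finite E"
    by (rule finite_subset[of _ "{..<n} \<times> {..<n}"]) (auto simp: E_def)
  have card_E: "card E \<le> cc_cost n s l"
  proof -
    have "E = {(x, y). x < y \<and> y < n \<and> l x = l y \<and> \<not> s x y}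
            \<union> {(x, y). x < y \<and> y < n \<and> l x \<noteq> l y \<and> s x y}"
      unfolding E_def by auto
    then show ?thesis
      unfolding cc_cost_def by (simp add: card_Un_le)
  qed
  have "(\<Sum>v\<in>F. vertex_cost n s l v) \<le> (\<Sum>v<n. vertex_cost n s l v)"
    using F by (intro sum_mono2) auto
  also have "\<dots> = card (SIGMA v:{..<n}. {y. y < n \<and> y \<noteq> v \<and> (l y = l v) \<noteq> s v y})"
    unfolding vertex_cost_def by (subst card_SigmaI) auto
  also have "\<dots> \<le> card (E \<union> prod.swap ` E)"
  proof (rule card_mono)
    show "finite (E \<union> prod.swap ` E)"
      using finite_E by simp
    show "(SIGMA v:{..<n}. {y. y < n \<and> y \<noteq> v \<and> (l y = l v) \<noteq> s v y}) \<subseteq> E \<union> prod.swap ` E"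
      using sym by (auto simp: E_def image_iff)
  qed
  also have "\<dots> \<le> card E + card (prod.swap ` E)"
    by (rule card_Un_le)
  also have "\<dots> \<le> 2 * card E"
    using card_image_le[OF finite_E, of prod.swap] by simp
  finally show ?thesis
    using card_E by linarith
qed

lemma vertex_cost_add_ge:
  "card {y. y < n \<and> y \<noteq> v \<and> s v y \<noteq> s' v y} \<le> vertex_cost n s l v + vertex_cost n s' l v"
proof -
  have "card {y. y < n \<and> y \<noteq> v \<and> s v y \<noteq> s' v y}
      \<le> card ({y. y < n \<and> y \<noteq> v \<and> (l y = l v) \<noteq> s v y} \<union> {y. y < n \<and> y \<noteq> v \<and> (l y = l v) \<noteq> s' v y})"
    by (rule card_mono) auto
  then show ?thesis
    unfolding vertex_cost_def using card_Un_le le_trans by blast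
qed

lemma sum_ge_if_pairwise_ge:
  fixes f :: "'a \<Rightarrow> nat"
  assumes "finite A" and pairwise: "\<And>i j. i \<in> A \<Longrightarrow> j \<in> A \<Longrightarrow> i \<noteq> j \<Longrightarrow> 2 * k \<le> f i + f j"
  shows "k * (card A - 1) \<le> sum f A"
proof -
  define Low where "Low = {i \<in> A. f i < k}"
  have "\<forall>i\<in>Low. \<forall>j\<in>Low. i = j"
    using pairwise by (fastforce simp: Low_def)
  then have "card Low \<le> 1"
    using \<open>finite A\<close> card_le_Suc0_iff_eq[of Low] by (simp add: Low_def)
  then have "card A - 1 \<le> card (A - Low)"
    using \<open>finite A\<close> card_Diff_subset[of Low A] by (auto simp: Low_def)
  then have "k * (card A - 1) \<le> (\<Sum>i\<in>A - Low. k)"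
    by simp
  also have "\<dots> \<le> sum f (A - Low)"
    by (rule sum_mono) (auto simp: Low_def)
  also have "\<dots> \<le> sum f A"
    using \<open>finite A\<close> by (intro sum_mono2) auto
  finally show ?thesis .
qed

text \<open>Vertices below m * k form the planted clusters {j * k..<j * k + k}, j < m; a vertex x \<in> F
  joins cluster \<sigma> x if \<sigma> x < m, and otherwise it is a singleton, like every other vertex:
  no other vertex carries the label m + x.\<close>

definition planted_label :: "nat \<Rightarrow> nat \<Rightarrow> nat set \<Rightarrow> (nat \<Rightarrow> nat) \<Rightarrow> nat \<Rightarrow> nat" where
  "planted_label m k F \<sigma> x =
     (if x < m * k then x div k else if x \<in> F \<and> \<sigma> x < m then \<sigma> x else m + x)"

lemma planted_label_eq_isolated: "planted_label m k F \<sigma> x = m + y \<Longrightarrow> x = y"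
  by (auto simp: planted_label_def split: if_splits)
    (metis less_mult_imp_div_less mult.commute not_add_less1)

lemma planted_label_update_other:
  "x \<noteq> v \<Longrightarrow> planted_label m k F (\<tau>(v := j)) x = planted_label m k F \<tau> x"
  by (simp add: planted_label_def)

context
  fixes n m k v :: nat and F :: "nat set" and \<tau> :: "nat \<Rightarrow> nat"
  assumes F_range: "F \<subseteq> {m * k..<n}" and v_in_F: "v \<in> F"
begin

text \<open>The planted instance with v put into cluster j, or left alone when j \<ge> m.\<close>

abbreviation placed :: "nat \<Rightarrow> nat \<Rightarrow> nat \<Rightarrow> bool" where
  "placed j \<equiv> cluster_instance n (planted_label m k F (\<tau>(v := j)))"

lemma v_range: "m * k \<le> v" "v < n"
  using F_range v_in_F by auto

lemma planted_label_placed_self: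
  "planted_label m k F (\<tau>(v := j)) v = (if j < m then j else m + v)"
  using v_range v_in_F by (simp add: planted_label_def)

lemma placed_isolated:
  assumes "m \<le> j"
  shows "placed j = placed m"
proof -
  have "planted_label m k F (\<tau>(v := j)) x = planted_label m k F (\<tau>(v := m)) x" for x
    using assms planted_label_update_other planted_label_placed_self by (cases "x = v") auto
  then have "planted_label m k F (\<tau>(v := j)) = planted_label m k F (\<tau>(v := m))" ..
  then show ?thesis
    by simp
qed

lemma placed_agree:
  assumes "j < m" "x = v \<longrightarrow> planted_label m k F \<tau> y \<noteq> j" "y = v \<longrightarrow> planted_label m k F \<tau> x \<noteq> j"
  shows "placed j x y = placed m x y"
proof -
  have "planted_label m k F (\<tau>(v := i)) z = (if z = v then i else planted_label m k F \<tau> z)"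
    if "i \<le> m" "z \<noteq> v \<or> i < m" for i z
    using that planted_label_update_other planted_label_placed_self by auto
  then show ?thesis
    using assms planted_label_update_other planted_label_placed_self
      planted_label_eq_isolated[of m k F \<tau> _ v]
    by (auto simp: cluster_instance_def)
qed

lemma query_path_placed:
  assumes "j < m" and "j \<notin> planted_label m k F \<tau> ` path_neighbours (query_path t (placed m)) v"
  shows "query_path t (placed j) = query_path t (placed m) \<and> qt_output t (placed j) = qt_output t (placed m)"
proof -
  have "placed j x y = placed m x y" if "(x, y) \<in> set (query_path t (placed m))" for x y
    using assms that by (intro placed_agree) (auto simp: path_neighbours_def)
  then show ?thesis
    by (intro query_path_cong) auto
qed

lemma card_placed_disagreements:
  assumes "i < m" "j < m" "i \<noteq> j"
  shows "2 * k \<le> card {y. y < n \<and> y \<noteq> v \<and> placed i v y \<noteq> placed j v y}"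
proof -
  have block: "y < n \<and> y \<noteq> v \<and> planted_label m k F \<tau> y = b"
    if "y \<in> {b * k..<b * k + k}" "b < m" for y b
  proof -
    have "b * k + k \<le> m * k"
      using \<open>b < m\<close> by (metis Suc_leI add.commute mult_Suc mult_le_mono1)
    moreover have "y div k = b"
      using that(1) by (intro div_nat_eqI) (auto simp: mult.commute)
    ultimately show ?thesis
      using that(1) v_range by (auto simp: planted_label_def)
  qed
  have "{i * k..<i * k + k} \<inter> {j * k..<j * k + k} = {}"
    using block[of _ i] block[of _ j] assms by blast
  then have "2 * k = card ({i * k..<i * k + k} \<union> {j * k..<j * k + k})"
    by (subst card_Un_disjoint) auto
  also have "\<dots> \<le> card {y. y < n \<and> y \<noteq> v \<and> placed i v y \<noteq> placed j v y}"
  proof (rule card_mono)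
    show "{i * k..<i * k + k} \<union> {j * k..<j * k + k} \<subseteq> {y. y < n \<and> y \<noteq> v \<and> placed i v y \<noteq> placed j v y}"
    proof
      fix y
      assume "y \<in> {i * k..<i * k + k} \<union> {j * k..<j * k + k}"
      then have "y < n" "y \<noteq> v" "planted_label m k F \<tau> y \<in> {i, j}"
        using block[of y i] block[of y j] assms by auto
      then show "y \<in> {y. y < n \<and> y \<noteq> v \<and> placed i v y \<noteq> placed j v y}"
        using assms v_range planted_label_update_other planted_label_placed_self
        by (auto simp: cluster_instance_def)
    qed
  qed simp
  finally show ?thesis .
qed

text \<open>Every cluster j that the run on placed m never probes gives the same run and output, and a
  single output can cost less than k at v for at most one such j.\<close>

lemma sum_vertex_cost_placed_ge:
  fixes t :: qtree
  defines "Unseen \<equiv> {..<m} - planted_label m k F \<tau> ` path_neighbours (query_path t (placed m)) v"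
  shows "k * (card Unseen - 1) \<le> (\<Sum>j<2 * m. vertex_cost n (placed j) (qt_output t (placed j)) v)"
proof -
  have "k * (card Unseen - 1) \<le> (\<Sum>j\<in>Unseen. vertex_cost n (placed j) (qt_output t (placed m)) v)"
  proof (rule sum_ge_if_pairwise_ge)
    fix i j
    assume "i \<in> Unseen" "j \<in> Unseen" "i \<noteq> j"
    then have "2 * k \<le> card {y. y < n \<and> y \<noteq> v \<and> placed i v y \<noteq> placed j v y}"
      by (intro card_placed_disagreements) (auto simp: Unseen_def)
    also have "\<dots> \<le> vertex_cost n (placed i) (qt_output t (placed m)) v
                       + vertex_cost n (placed j) (qt_output t (placed m)) v"
      by (rule vertex_cost_add_ge)
    finally show "2 * k \<le> vertex_cost n (placed i) (qt_output t (placed m)) v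
                       + vertex_cost n (placed j) (qt_output t (placed m)) v" .
  qed (simp add: Unseen_def)
  also have "\<dots> = (\<Sum>j\<in>Unseen. vertex_cost n (placed j) (qt_output t (placed j)) v)"
    using query_path_placed by (intro sum.cong) (auto simp: Unseen_def)
  also have "\<dots> \<le> (\<Sum>j<2 * m. vertex_cost n (placed j) (qt_output t (placed j)) v)"
    by (intro sum_mono2) (auto simp: Unseen_def)
  finally show ?thesis .
qed

lemma sum_incident_queries_placed_ge:
  "m * incident_queries (query_path t (placed m)) v
     \<le> (\<Sum>j<2 * m. incident_queries (query_path t (placed j)) v)"
proof -
  have "m * incident_queries (query_path t (placed m)) v
      = (\<Sum>j\<in>{m..<2 * m}. incident_queries (query_path t (placed m)) v)"
    by simp
  also have "\<dots> = (\<Sum>j\<in>{m..<2 * m}. incident_queries (query_path t (placed j)) v)"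
    by (intro sum.cong refl) (metis atLeastLessThan_iff placed_isolated)
  also have "\<dots> \<le> (\<Sum>j<2 * m. incident_queries (query_path t (placed j)) v)"
    by (intro sum_mono2) auto
  finally show ?thesis .
qed

lemma vertex_cost_query_tradeoff:
  "m * k * (m - 1) \<le> m * (\<Sum>j<2 * m. vertex_cost n (placed j) (qt_output t (placed j)) v)
                      + k * (\<Sum>j<2 * m. incident_queries (query_path t (placed j)) v)"
proof -
  define path where "path = query_path t (placed m)"
  define r where "r = incident_queries path v"
  define Unseen where "Unseen = {..<m} - planted_label m k F \<tau> ` path_neighbours path v"
  have "m \<le> card Unseen + r"
    unfolding Unseen_def r_def by (rule card_Diff_image_path_neighbours)
  then have "m * k * (m - 1) \<le> m * (k * (card Unseen - 1)) + k * (m * r)"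
    using mult_le_mono2[of "m - 1" "card Unseen - 1 + r" "m * k"] by (simp add: algebra_simps)
  then show ?thesis
    using sum_vertex_cost_placed_ge[of t] sum_incident_queries_placed_ge[of t]
    unfolding Unseen_def r_def path_def by (meson add_mono mult_le_mono2 le_trans)
qed

end

lemma sum_PiE_remove:
  assumes "v \<in> F"
  shows "(\<Sum>\<sigma>\<in>PiE F S. g \<sigma>) = (\<Sum>\<sigma>\<in>PiE (F - {v}) S. \<Sum>j\<in>S v. g (\<sigma>(v := j)))"
proof -
  have "(\<Sum>\<sigma>\<in>PiE F S. g \<sigma>) = (\<Sum>\<sigma>\<in>(\<lambda>(j, \<sigma>). \<sigma>(v := j)) ` (S v \<times> PiE (F - {v}) S). g \<sigma>)"
    using assms by (metis PiE_insert_eq insert_Diff)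
  also have "\<dots> = (\<Sum>(j, \<sigma>)\<in>S v \<times> PiE (F - {v}) S. g (\<sigma>(v := j)))"
    using inj_combinator[of v "F - {v}" S] by (simp add: sum.reindex prod.case_distrib)
  also have "\<dots> = (\<Sum>\<sigma>\<in>PiE (F - {v}) S. \<Sum>j\<in>S v. g (\<sigma>(v := j)))"
    by (subst sum.cartesian_product[symmetric]) (rule sum.swap)
  finally show ?thesis .
qed

lemma card_PiE_remove:
  assumes "finite F" "v \<in> F"
  shows "card (PiE F S) = card (S v) * card (PiE (F - {v}) S)"
  using assms by (simp add: card_PiE prod.remove)

lemma planted_vertex_average:
  fixes n m k v :: nat and F :: "nat set" and t :: qtree
  defines "P \<equiv> PiE F (\<lambda>_. {..<2 * m})"
    and "inst \<equiv> \<lambda>\<sigma>. cluster_instance n (planted_label m k F \<sigma>)"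
  assumes F_range: "F \<subseteq> {m * k..<n}" and "v \<in> F"
  shows "card P * k * (m - 1) \<le> 2 * (\<Sum>\<sigma>\<in>P. m * vertex_cost n (inst \<sigma>) (qt_output t (inst \<sigma>)) v
                                              + k * incident_queries (query_path t (inst \<sigma>)) v)"
proof -
  define w where "w \<sigma> = m * vertex_cost n (inst \<sigma>) (qt_output t (inst \<sigma>)) v
                         + k * incident_queries (query_path t (inst \<sigma>)) v" for \<sigma>
  define P' where "P' = PiE (F - {v}) (\<lambda>_. {..<2 * m})"
  have "card P' * (m * k * (m - 1)) = (\<Sum>\<tau>\<in>P'. m * k * (m - 1))"
    by simp
  also have "\<dots> \<le> (\<Sum>\<tau>\<in>P'. \<Sum>j<2 * m. w (\<tau>(v := j)))"
    using vertex_cost_query_tradeoff[OF F_range \<open>v \<in> F\<close>]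
    by (intro sum_mono) (simp add: w_def inst_def sum.distrib sum_distrib_left)
  also have "\<dots> = (\<Sum>\<sigma>\<in>P. w \<sigma>)"
    unfolding P_def P'_def by (rule sum_PiE_remove[OF \<open>v \<in> F\<close>, where S = "\<lambda>_. {..<2 * m}", symmetric])
  finally show ?thesis
    using card_PiE_remove[OF finite_subset[OF F_range] \<open>v \<in> F\<close>, of "\<lambda>_. {..<2 * m}"]
    by (simp add: P_def P'_def w_def algebra_simps)
qed

lemma planted_cost_query_tradeoff:
  fixes n m k Q :: nat and F :: "nat set" and t :: qtree
  defines "P \<equiv> PiE F (\<lambda>_. {..<2 * m})"
    and "inst \<equiv> \<lambda>\<sigma>. cluster_instance n (planted_label m k F \<sigma>)"
  assumes F_range: "F \<subseteq> {m * k..<n}" and queries: "\<forall>\<sigma>\<in>P. qt_queries t (inst \<sigma>) \<le> Q"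
  shows "card F * card P * k * (m - 1)
           \<le> 4 * m * (\<Sum>\<sigma>\<in>P. cc_cost n (inst \<sigma>) (qt_output t (inst \<sigma>))) + 4 * k * card P * Q"
proof -
  define w where "w \<sigma> v = m * vertex_cost n (inst \<sigma>) (qt_output t (inst \<sigma>)) v
                           + k * incident_queries (query_path t (inst \<sigma>)) v" for \<sigma> v
  have finite_F: "finite F"
    using F_range finite_subset by blast
  have per_vertex: "card P * k * (m - 1) \<le> 2 * (\<Sum>\<sigma>\<in>P. w \<sigma> v)" if "v \<in> F" for v
    using planted_vertex_average[OF F_range that, of t] by (simp add: P_def inst_def w_def)
  have per_instance: "(\<Sum>v\<in>F. w \<sigma> v) \<le> 2 * m * cc_cost n (inst \<sigma>) (qt_output t (inst \<sigma>)) + 2 * k * Q"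
    if "\<sigma> \<in> P" for \<sigma>
  proof -
    have "(\<Sum>v\<in>F. vertex_cost n (inst \<sigma>) (qt_output t (inst \<sigma>)) v) \<le> 2 * cc_cost n (inst \<sigma>) (qt_output t (inst \<sigma>))"
      using F_range by (intro sum_vertex_cost_le) (auto simp: inst_def cluster_instance_def)
    moreover have "(\<Sum>v\<in>F. incident_queries (query_path t (inst \<sigma>)) v) \<le> 2 * Q"
      using sum_incident_queries_le[OF finite_F] queries that length_query_path
      by (metis le_trans mult_le_mono2)
    ultimately have "m * (\<Sum>v\<in>F. vertex_cost n (inst \<sigma>) (qt_output t (inst \<sigma>)) v)
        + k * (\<Sum>v\<in>F. incident_queries (query_path t (inst \<sigma>)) v)
        \<le> m * (2 * cc_cost n (inst \<sigma>) (qt_output t (inst \<sigma>))) + k * (2 * Q)"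
      by (intro add_mono mult_le_mono2)
    then show ?thesis
      by (simp add: w_def sum.distrib sum_distrib_left ac_simps)
  qed
  have "card F * card P * k * (m - 1) = (\<Sum>v\<in>F. card P * k * (m - 1))"
    by simp
  also have "\<dots> \<le> (\<Sum>v\<in>F. 2 * (\<Sum>\<sigma>\<in>P. w \<sigma> v))"
    by (intro sum_mono per_vertex)
  also have "\<dots> = 2 * (\<Sum>\<sigma>\<in>P. \<Sum>v\<in>F. w \<sigma> v)"
    by (simp add: sum_distrib_left sum.swap[of _ F])
  also have "\<dots> \<le> 2 * (\<Sum>\<sigma>\<in>P. 2 * m * cc_cost n (inst \<sigma>) (qt_output t (inst \<sigma>)) + 2 * k * Q)"
    by (intro mult_le_mono2 sum_mono per_instance)
  also have "\<dots> = 4 * m * (\<Sum>\<sigma>\<in>P. cc_cost n (inst \<sigma>) (qt_output t (inst \<sigma>))) + 4 * k * card P * Q"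
    by (simp add: sum.distrib sum_distrib_left algebra_simps)
  finally show ?thesis .
qed

lemma integrable_cc_cost: "integrable (measure_pmf A) (\<lambda>t. real (cc_cost n s (qt_output t s)))"
proof (rule measure_pmf.integrable_const_bound[where B = "real (2 * n * n)"])
  show "AE t in measure_pmf A. norm (real (cc_cost n s (qt_output t s))) \<le> real (2 * n * n)"
    using cc_cost_le by (intro AE_pmfI) (simp only: norm_of_nat of_nat_le_iff)
qed simp

lemma planted_query_lower_bound:
  fixes n m k Q :: nat and F :: "nat set" and T :: real and A :: "qtree pmf"
  assumes F_range: "F \<subseteq> {m * k..<n}" and "m > 0"
    and cost: "\<forall>s. cc_instance n s \<longrightarrow> cc_OPT n s = 0 \<longrightarrow> expected_cost n A s \<le> T"
    and queries: "\<forall>t\<in>set_pmf A. \<forall>s. cc_instance n s \<longrightarrow> qt_queries t s \<le> Q"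
  shows "real (card F * k * (m - 1)) \<le> 4 * m * T + 4 * k * Q"
proof -
  define P where "P = PiE F (\<lambda>_. {..<2 * m})"
  define inst where "inst \<sigma> = cluster_instance n (planted_label m k F \<sigma>)" for \<sigma>
  define C where "C = (\<lambda>\<sigma> t. real (cc_cost n (inst \<sigma>) (qt_output t (inst \<sigma>))))"
  have "finite F"
    using F_range finite_subset by blast
  then have "card P > 0"
    using \<open>m > 0\<close> by (simp add: P_def card_PiE)
  have integrable: "integrable (measure_pmf A) (C \<sigma>)" for \<sigma>
    unfolding C_def by (rule integrable_cc_cost)
  have expected_C: "measure_pmf.expectation A (C \<sigma>) \<le> T" for \<sigma>
    using cost[rule_format, OF cc_instance_cluster_instance cc_OPT_cluster_instance]
    unfolding C_def inst_def expected_cost_def .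
  have pointwise: "real (card F * card P * k * (m - 1)) \<le> 4 * m * (\<Sum>\<sigma>\<in>P. C \<sigma> t) + 4 * k * card P * Q"
    if "t \<in> set_pmf A" for t
  proof -
    have "\<forall>\<sigma>\<in>P. qt_queries t (inst \<sigma>) \<le> Q"
      using queries that cc_instance_cluster_instance by (simp add: inst_def)
    from planted_cost_query_tradeoff[OF F_range this[unfolded P_def inst_def]]
    have "real (card F * card P * k * (m - 1))
        \<le> real (4 * m * (\<Sum>\<sigma>\<in>P. cc_cost n (inst \<sigma>) (qt_output t (inst \<sigma>))) + 4 * k * card P * Q)"
      unfolding P_def inst_def by (simp only: of_nat_le_iff)
    then show ?thesis
      unfolding C_def by simp
  qed
  have "real (card F * card P * k * (m - 1)) = measure_pmf.expectation A (\<lambda>_. real (card F * card P * k * (m - 1)))"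
    by simp
  also have "\<dots> \<le> measure_pmf.expectation A (\<lambda>t. 4 * m * (\<Sum>\<sigma>\<in>P. C \<sigma> t) + 4 * k * card P * Q)"
    using integrable pointwise by (intro integral_mono_AE) (auto intro!: AE_pmfI)
  also have "\<dots> = 4 * m * (\<Sum>\<sigma>\<in>P. measure_pmf.expectation A (C \<sigma>)) + 4 * k * card P * Q"
    using integrable by simp
  also have "\<dots> \<le> 4 * m * (\<Sum>\<sigma>\<in>P. T) + 4 * k * card P * Q"
    using expected_C by (intro add_mono mult_left_mono sum_mono) auto
  also have "\<dots> = real (card P) * (4 * m * T + 4 * k * Q)"
    by (simp add: algebra_simps)
  finally show ?thesis
    using \<open>card P > 0\<close> by (simp add: mult.assoc mult.left_commute[of "real (card P)"])
qed

lemma planted_parameters: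
  fixes n :: nat and T :: real
  assumes "8 * real n < T" and "T \<le> (real n)\<^sup>2 / 2048"
  obtains k m :: nat where "0 < k" "2 \<le> m" "2 * k * m \<le> n" "real n \<le> 4 * k * m"
    "32 * T \<le> k * n" "k * n \<le> 64 * T"
proof -
  define N where "N = real n"
  have "N > 0"
    using assms by (cases "n = 0") (auto simp: N_def)
  define x where "x = 64 * T / N"
  have "x > 512"
    using assms \<open>N > 0\<close> by (simp add: x_def N_def field_simps)
  have "x \<le> N / 32"
    using assms \<open>N > 0\<close> by (simp add: x_def N_def field_simps power2_eq_square)
  define k where "k = nat \<lfloor>x\<rfloor>"
  have k_floor: "real k \<le> x" "x - 1 < real k"
    using \<open>x > 512\<close> by (simp_all add: k_def)
  then have "0 < k"
    using \<open>x > 512\<close> by simp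
  have k_scaled: "32 * T \<le> k * n" "k * n \<le> 64 * T"
    using k_floor \<open>x > 512\<close> \<open>N > 0\<close> by (simp_all add: x_def N_def field_simps)
  have "4 * k \<le> n"
    using k_floor \<open>x \<le> N / 32\<close> \<open>N > 0\<close> by (simp add: N_def)
  define m where "m = n div (2 * k)"
  have "2 * k * m \<le> n"
    by (simp add: m_def)
  moreover have "n < 2 * k * m + 2 * k"
    using \<open>0 < k\<close> dividend_less_times_div[of "2 * k" n] by (simp add: m_def algebra_simps)
  moreover have "2 \<le> m"
    using \<open>4 * k \<le> n\<close> \<open>0 < k\<close> by (simp add: m_def less_eq_div_iff_mult_less_eq)
  moreover have "2 * k \<le> 2 * k * m"
    using \<open>2 \<le> m\<close> by simp
  ultimately have "n \<le> 4 * k * m"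
    by linarith
  then have "real n \<le> 4 * k * m"
    by (metis of_nat_mono)
  then show ?thesis
    using that \<open>0 < k\<close> \<open>2 \<le> m\<close> \<open>2 * k * m \<le> n\<close> k_scaled by blast
qed

lemma tradeoff_implies_cubic_bound:
  fixes N K M D T q :: real
  assumes "0 \<le> N" "0 < K" "2 \<le> M" "N / 2 \<le> D" and tradeoff: "D * K * (M - 1) \<le> 4 * M * T + 4 * K * q"
    and "32 * T \<le> K * N" "N \<le> 4 * K * M" "K * N \<le> 64 * T"
  shows "N ^ 3 \<le> 8192 * T * q"
proof -
  have "N * M / 4 \<le> N / 2 * (M - 1)"
    using \<open>0 \<le> N\<close> \<open>2 \<le> M\<close> mult_left_mono[of 2 M N] by (simp add: algebra_simps)
  also have "\<dots> \<le> D * (M - 1)"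
    using \<open>N / 2 \<le> D\<close> \<open>2 \<le> M\<close> by (intro mult_right_mono) auto
  finally have "K * (N * M / 4) \<le> D * K * (M - 1)"
    using \<open>0 < K\<close> mult_left_mono by (fastforce simp: ac_simps)
  moreover have "4 * M * T \<le> K * (N * M / 8)"
    using \<open>32 * T \<le> K * N\<close> \<open>2 \<le> M\<close> mult_left_mono[of "32 * T" "K * N" M] by (simp add: algebra_simps)
  ultimately have "K * (N * M) \<le> K * (32 * q)"
    using tradeoff by (simp add: algebra_simps)
  then have NM: "N * M \<le> 32 * q"
    using \<open>0 < K\<close> by simp
  moreover have "0 \<le> N * M"
    using \<open>0 \<le> N\<close> \<open>2 \<le> M\<close> by simp
  ultimately have "0 \<le> q"
    by linarith
  have "N * N \<le> N * (4 * K * M)"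
    using \<open>N \<le> 4 * K * M\<close> \<open>0 \<le> N\<close> by (rule mult_left_mono)
  also have "\<dots> \<le> 4 * K * (32 * q)"
    using NM \<open>0 < K\<close> by (simp add: algebra_simps)
  finally have "N ^ 3 \<le> N * (128 * K * q)"
    using \<open>0 \<le> N\<close> mult_left_mono by (fastforce simp: power3_eq_cube algebra_simps)
  also have "\<dots> = 128 * q * (K * N)"
    by (simp add: algebra_simps)
  also have "\<dots> \<le> 128 * q * (64 * T)"
    using \<open>0 \<le> q\<close> \<open>K * N \<le> 64 * T\<close> by (intro mult_left_mono) auto
  finally show ?thesis
    by (simp add: algebra_simps)
qed

lemma query_lower_bound:
  fixes n Q :: nat and T :: real and A :: "qtree pmf"
  assumes "8 * real n < T" "T \<le> (real n)\<^sup>2 / 2048"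
    and cost: "\<forall>s. cc_instance n s \<longrightarrow> cc_OPT n s = 0 \<longrightarrow> expected_cost n A s \<le> T"
    and queries: "\<forall>t\<in>set_pmf A. \<forall>s. cc_instance n s \<longrightarrow> qt_queries t s \<le> Q"
  shows "(real n) ^ 3 \<le> 8192 * T * Q"
proof -
  obtain k m :: nat where "0 < k" "2 \<le> m" "2 * k * m \<le> n" "real n \<le> 4 * k * m"
    "32 * T \<le> k * n" "k * n \<le> 64 * T"
    using planted_parameters[OF assms(1,2)] by blast
  moreover have "real (card {m * k..<n} * k * (m - 1)) \<le> 4 * m * T + 4 * k * Q"
    using \<open>2 \<le> m\<close> by (intro planted_query_lower_bound[OF _ _ cost queries]) auto
  moreover have "real n / 2 \<le> real (card {m * k..<n})"
  proof -
    have "m * k \<le> n"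
      using le_trans[OF _ \<open>2 * k * m \<le> n\<close>] by simp
    then have "real (card {m * k..<n}) = real n - real m * real k"
      by (simp add: of_nat_diff)
    moreover have "2 * (real m * real k) \<le> real n"
      using of_nat_le_iff[of "2 * k * m" n, where 'a = real] \<open>2 * k * m \<le> n\<close> by (simp add: ac_simps)
    ultimately show ?thesis
      by linarith
  qed
  ultimately show ?thesis
    using \<open>2 \<le> m\<close> by (intro tradeoff_implies_cubic_bound[where D = "real (card {m * k..<n})"]) (simp_all add: of_nat_diff)
qed

theorem theorem4p1:
  "\<exists>a::real. a > 0 \<and>
     (\<forall>(n::nat) (c::real) (T::real) (A::qtree pmf) (Q::nat).
        c \<ge> 1 \<longrightarrow> 8 * real n < T \<longrightarrow> T \<le> (real n)^2 / (2048 * c^2) \<longrightarrow>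
        (\<forall>s. cc_instance n s \<longrightarrow> expected_cost n A s \<le> c * real (cc_OPT n s) + T) \<longrightarrow>
        (\<forall>t\<in>set_pmf A. \<forall>s. cc_instance n s \<longrightarrow> qt_queries t s \<le> Q) \<longrightarrow>
        real Q \<ge> a * (real n)^3 / (T * c^2))"
proof (intro exI[of _ "1 / 8192"] conjI allI impI)
  fix n Q :: nat and c T :: real and A :: "qtree pmf"
  assume "c \<ge> 1" "8 * real n < T" "T \<le> (real n)^2 / (2048 * c^2)"
    and cost: "\<forall>s. cc_instance n s \<longrightarrow> expected_cost n A s \<le> c * real (cc_OPT n s) + T"
    and queries: "\<forall>t\<in>set_pmf A. \<forall>s. cc_instance n s \<longrightarrow> qt_queries t s \<le> Q"
  have "1 \<le> c^2" and "0 < T"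
    using \<open>c \<ge> 1\<close> \<open>8 * real n < T\<close> by simp_all
  have "(real n)^2 / (2048 * c^2) \<le> (real n)^2 / 2048"
    using \<open>1 \<le> c^2\<close> by (intro divide_left_mono) auto
  then have "T \<le> (real n)^2 / 2048"
    using \<open>T \<le> (real n)^2 / (2048 * c^2)\<close> by linarith
  moreover have "\<forall>s. cc_instance n s \<longrightarrow> cc_OPT n s = 0 \<longrightarrow> expected_cost n A s \<le> T"
    using cost by auto
  ultimately have "(real n)^3 \<le> 8192 * T * Q"
    using query_lower_bound \<open>8 * real n < T\<close> queries by blast
  have "(real n)^3 / (8192 * (T * c^2)) \<le> (real n)^3 / (8192 * T)"
    using \<open>1 \<le> c^2\<close> \<open>0 < T\<close> by (intro divide_left_mono) (auto intro!: mult_pos_pos)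
  also have "\<dots> \<le> real Q"
    using \<open>(real n)^3 \<le> 8192 * T * Q\<close> \<open>0 < T\<close> by (simp add: pos_divide_le_eq ac_simps)
  finally show "1 / 8192 * (real n)^3 / (T * c^2) \<le> real Q"
    by simp
qed simp

end
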